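(* Let $n \ge 1$ and let $m$ be an even positive integer such that $\Delta_{n,m} \neq \emptyset$, i.e. there exists a positive semidefinite form in $n$ real variables of degree $m$ that is not a sum of squares of forms. Then there does not exist a non-zero form $h \in H_d(\mathbb{R}^n)$ (for any $d$) such that $hp$ is a sum of squares for every $p \in P_{n,m}$.
   Context: $H_d(\mathbb{R}^n)$ denotes the real vector space of real homogeneous forms of degree $d$ in $n$ variables $x_1,\dots,x_n$. For even $m$, $P_{n,m}$ is the set of forms $p \in H_m(\mathbb{R}^n)$ that are positive semidefinite (psd), i.e. $p(x) \ge 0$ for all $x \in \mathbb{R}^n$. A form is a sum of squares (sos) if it can be written as $\sum_k h_k^2$ with each $h_k$ a real polynomial. $\Sigma_{n,m} \subseteq P_{n,m}$ is the set of sos forms in $H_m(\mathbb{R}^n)$, and $\Delta_{n,m} = P_{n,m} \setminus \Sigma_{n,m}$. *)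

theory Defs
  imports Complex_Main
begin

(* Points of R^n are represented as functions nat => real; only coordinates 0..n-1 matter.
   Exponent vectors are functions nat => nat vanishing outside {0..<n}. *)

definition exps :: "nat \<Rightarrow> (nat \<Rightarrow> nat) set" where
  "exps n = {\<alpha>. \<forall>i. n \<le> i \<longrightarrow> \<alpha> i = 0}"

definition mons_eq :: "nat \<Rightarrow> nat \<Rightarrow> (nat \<Rightarrow> nat) set" where
  "mons_eq n d = {\<alpha> \<in> exps n. (\<Sum>i<n. \<alpha> i) = d}"

definition mons_le :: "nat \<Rightarrow> nat \<Rightarrow> (nat \<Rightarrow> nat) set" where
  "mons_le n D = {\<alpha> \<in> exps n. (\<Sum>i<n. \<alpha> i) \<le> D}"

definition monom_eval :: "nat \<Rightarrow> (nat \<Rightarrow> nat) \<Rightarrow> (nat \<Rightarrow> real) \<Rightarrow> real" where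
  "monom_eval n \<alpha> x = (\<Prod>i<n. x i ^ \<alpha> i)"

definition is_poly :: "nat \<Rightarrow> ((nat \<Rightarrow> real) \<Rightarrow> real) \<Rightarrow> bool" where
  "is_poly n f \<longleftrightarrow> (\<exists>D c. \<forall>x. f x = (\<Sum>\<alpha>\<in>mons_le n D. c \<alpha> * monom_eval n \<alpha> x))"

definition is_form :: "nat \<Rightarrow> nat \<Rightarrow> ((nat \<Rightarrow> real) \<Rightarrow> real) \<Rightarrow> bool" where
  "is_form n d f \<longleftrightarrow> (\<exists>c. \<forall>x. f x = (\<Sum>\<alpha>\<in>mons_eq n d. c \<alpha> * monom_eval n \<alpha> x))"

definition psd :: "((nat \<Rightarrow> real) \<Rightarrow> real) \<Rightarrow> bool" where
  "psd p \<longleftrightarrow> (\<forall>x. 0 \<le> p x)"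

definition is_sos :: "nat \<Rightarrow> ((nat \<Rightarrow> real) \<Rightarrow> real) \<Rightarrow> bool" where
  "is_sos n p \<longleftrightarrow> (\<exists>hs. (\<forall>h\<in>set hs. is_poly n h) \<and> (\<forall>x. p x = (\<Sum>h\<leftarrow>hs. (h x)\<^sup>2)))"

definition P_set :: "nat \<Rightarrow> nat \<Rightarrow> ((nat \<Rightarrow> real) \<Rightarrow> real) set" where
  "P_set n m = {p. is_form n m p \<and> psd p}"

definition Sigma_set :: "nat \<Rightarrow> nat \<Rightarrow> ((nat \<Rightarrow> real) \<Rightarrow> real) set" where
  "Sigma_set n m = {p. is_form n m p \<and> is_sos n p}"

definition Delta_set :: "nat \<Rightarrow> nat \<Rightarrow> ((nat \<Rightarrow> real) \<Rightarrow> real) set" where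
  "Delta_set n m = P_set n m - Sigma_set n m"

end

theory Submission
  imports Defs "HOL-Analysis.Analysis"
begin

text \<open>Argue by contradiction with a nonzero multiplier \<open>h\<close> of degree \<open>d\<close> and a psd form \<open>q\<close> that
  is not a sum of squares. Testing \<open>h\<close> against the psd forms \<open>q \<circ> L\<close>, \<open>L\<close> linear, shows
  \<open>h \<ge> 0\<close> off the hyperplane \<open>x\<^sub>0 = 0\<close>; hence \<open>d\<close> is even and \<open>h a > 0\<close> for some \<open>a\<close> with
  \<open>a\<^sub>0 > 0\<close>. For \<open>t > 0\<close> the substitution \<open>y \<mapsto> t y + y\<^sub>0 a\<close> is invertible, so
  \<open>h (t y + y\<^sub>0 a) q y\<close> is a sum of squares; its squares are forms of degree \<open>D = (d + m) / 2\<close>,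
  and Givens rotations reduce their number to \<open>dim H\<^sub>D\<close>. Sums of that many squares of forms
  make up a closed cone, so the limit \<open>h a y\<^sub>0\<^sup>d q y\<close> at \<open>t = 0\<close> is a sum of squares too. All
  of its squares vanish on \<open>y\<^sub>0 = 0\<close>, so \<open>y\<^sub>0 ^ (d div 2)\<close> can be divided out of each of them,
  and \<open>q\<close> is a sum of squares after all.\<close>

section \<open>Forms\<close>

lemma sum_regroup:
  fixes a :: "'a \<Rightarrow> real"
  assumes "finite S" "finite T" "g ` S \<subseteq> T"
  shows "(\<Sum>x\<in>S. a x * m (g x)) = (\<Sum>y\<in>T. (\<Sum>x\<in>{x\<in>S. g x = y}. a x) * m y)"
proof -
  have "(\<Sum>x\<in>S. a x * m (g x)) = (\<Sum>y\<in>T. \<Sum>x\<in>{x\<in>S. g x = y}. a x * m (g x))"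
    using sum.group[OF assms, of "\<lambda>x. a x * m (g x)"] by simp
  also have "\<dots> = (\<Sum>y\<in>T. (\<Sum>x\<in>{x\<in>S. g x = y}. a x) * m y)"
    by (intro sum.cong refl) (simp add: sum_distrib_right)
  finally show ?thesis .
qed

definition lincomb :: "'a set \<Rightarrow> ('a \<Rightarrow> 'x \<Rightarrow> real) \<Rightarrow> ('a \<Rightarrow> real) \<Rightarrow> 'x \<Rightarrow> real" where
  "lincomb S \<phi> c x = (\<Sum>\<alpha>\<in>S. c \<alpha> * \<phi> \<alpha> x)"

lemma finite_mons_le: "finite (mons_le n D)"
proof -
  have "mons_le n D \<subseteq> {f. \<forall>i. (i \<in> {..<n} \<longrightarrow> f i \<in> {..D}) \<and> (i \<notin> {..<n} \<longrightarrow> f i = 0)}"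
  proof (intro subsetI CollectI allI conjI impI)
    fix \<alpha> i assume \<alpha>: "\<alpha> \<in> mons_le n D"
    show "i \<notin> {..<n} \<Longrightarrow> \<alpha> i = 0" using \<alpha> by (auto simp: mons_le_def exps_def)
    assume "i \<in> {..<n}"
    then have "\<alpha> i \<le> (\<Sum>i<n. \<alpha> i)" by (intro member_le_sum) auto
    with \<alpha> show "\<alpha> i \<in> {..D}" by (simp add: mons_le_def)
  qed
  moreover have "finite {f. \<forall>i. (i \<in> {..<n} \<longrightarrow> f i \<in> {..D}) \<and> (i \<notin> {..<n} \<longrightarrow> f i = (0::nat))}"
    by (rule finite_set_of_finite_funs) auto
  ultimately show ?thesis by (rule finite_subset)
qed

lemma mons_eq_subset_mons_le: "mons_eq n d \<subseteq> mons_le n d"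
  by (auto simp: mons_eq_def mons_le_def)

lemma finite_mons_eq: "finite (mons_eq n d)"
  using finite_subset[OF mons_eq_subset_mons_le finite_mons_le] .

lemma mons_eq_0: "mons_eq n 0 = {\<lambda>_. 0}"
  by (auto simp: mons_eq_def exps_def fun_eq_iff) (metis lessThan_iff not_le)

lemma monom_eval_scale: "monom_eval n \<alpha> (\<lambda>i. t * x i) = t ^ (\<Sum>i<n. \<alpha> i) * monom_eval n \<alpha> x"
  by (simp add: monom_eval_def power_mult_distrib prod.distrib power_sum)

lemma monom_eval_add: "monom_eval n (\<lambda>i. \<alpha> i + \<beta> i) x = monom_eval n \<alpha> x * monom_eval n \<beta> x"
  by (simp add: monom_eval_def power_add prod.distrib)

lemma is_form_iff_lincomb: "is_form n d f \<longleftrightarrow> (\<exists>c. f = lincomb (mons_eq n d) (monom_eval n) c)"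
  by (auto simp: is_form_def lincomb_def fun_eq_iff)

lemma form_homogeneous:
  assumes "is_form n d f" shows "f (\<lambda>i. t * x i) = t ^ d * f x"
proof -
  obtain c where c: "f = lincomb (mons_eq n d) (monom_eval n) c"
    using assms by (auto simp: is_form_iff_lincomb)
  show ?thesis
    unfolding c lincomb_def sum_distrib_left
    by (intro sum.cong refl) (simp add: monom_eval_scale mons_eq_def)
qed

lemma form_zero: "is_form n d (\<lambda>x. 0)"
  unfolding is_form_def by (rule exI[of _ "\<lambda>_. 0"]) simp

lemma form_add:
  assumes "is_form n d f" "is_form n d g" shows "is_form n d (\<lambda>x. f x + g x)"
proof -
  obtain c u where "f = lincomb (mons_eq n d) (monom_eval n) c" "g = lincomb (mons_eq n d) (monom_eval n) u"
    using assms by (auto simp: is_form_iff_lincomb)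
  then have "(\<lambda>x. f x + g x) = lincomb (mons_eq n d) (monom_eval n) (\<lambda>\<alpha>. c \<alpha> + u \<alpha>)"
    by (simp add: lincomb_def fun_eq_iff sum.distrib distrib_right)
  then show ?thesis by (auto simp: is_form_iff_lincomb)
qed

lemma form_smult:
  assumes "is_form n d f" shows "is_form n d (\<lambda>x. a * f x)"
proof -
  obtain c where "f = lincomb (mons_eq n d) (monom_eval n) c"
    using assms by (auto simp: is_form_iff_lincomb)
  then have "(\<lambda>x. a * f x) = lincomb (mons_eq n d) (monom_eval n) (\<lambda>\<alpha>. a * c \<alpha>)"
    by (simp add: lincomb_def fun_eq_iff sum_distrib_left mult.assoc)
  then show ?thesis by (auto simp: is_form_iff_lincomb)
qed

lemma form_sum: "finite A \<Longrightarrow> (\<And>a. a \<in> A \<Longrightarrow> is_form n d (f a)) \<Longrightarrow> is_form n d (\<lambda>x. \<Sum>a\<in>A. f a x)"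
  by (induction A rule: finite_induct) (auto intro: form_add form_zero)

lemma form_sum_list: "(\<And>g. g \<in> set gs \<Longrightarrow> is_form n d (f g)) \<Longrightarrow> is_form n d (\<lambda>x. \<Sum>g\<leftarrow>gs. f g x)"
  by (induction gs) (auto intro: form_add form_zero)

lemma form_monom:
  assumes "\<alpha> \<in> mons_eq n d" shows "is_form n d (monom_eval n \<alpha>)"
proof -
  have "(\<Sum>\<beta>\<in>mons_eq n d. (if \<beta> = \<alpha> then 1 else 0) * monom_eval n \<beta> x)
      = (\<Sum>\<beta>\<in>mons_eq n d. if \<beta> = \<alpha> then monom_eval n \<beta> x else 0)" for x
    by (intro sum.cong) auto
  then show ?thesis
    using assms unfolding is_form_def
    by (intro exI[of _ "\<lambda>\<beta>. if \<beta> = \<alpha> then 1 else 0"]) (simp add: sum.delta' finite_mons_eq)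
qed

lemma monom_eval_unit: "i < n \<Longrightarrow> monom_eval n (\<lambda>j. if j = i then 1 else 0) x = x i"
  by (simp add: monom_eval_def if_distrib prod.delta' cong: if_cong)

lemma form_var:
  assumes "i < n" shows "is_form n 1 (\<lambda>x. x i)"
proof -
  have "(\<lambda>j. if j = i then 1 else 0) \<in> mons_eq n 1"
    using assms by (auto simp: mons_eq_def exps_def)
  moreover have "monom_eval n (\<lambda>j. if j = i then 1 else 0) = (\<lambda>x. x i)"
    using assms by (simp add: fun_eq_iff monom_eval_unit)
  ultimately show ?thesis using form_monom by metis
qed

lemma form_const: "is_form n 0 (\<lambda>x. c)"
  unfolding is_form_def mons_eq_0 by (intro exI[of _ "\<lambda>_. c"]) (simp add: monom_eval_def)

lemma form_mult:
  assumes "is_form n d f" "is_form n e g" shows "is_form n (d + e) (\<lambda>x. f x * g x)"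
proof -
  obtain c u where f: "f = lincomb (mons_eq n d) (monom_eval n) c"
    and g: "g = lincomb (mons_eq n e) (monom_eval n) u"
    using assms by (auto simp: is_form_iff_lincomb)
  let ?S = "mons_eq n d \<times> mons_eq n e"
  let ?add = "\<lambda>p::(nat \<Rightarrow> nat) \<times> (nat \<Rightarrow> nat). (\<lambda>i. fst p i + snd p i)"
  define w where "w \<gamma> = (\<Sum>p\<in>{p\<in>?S. ?add p = \<gamma>}. c (fst p) * u (snd p))" for \<gamma>
  have "?add ` ?S \<subseteq> mons_eq n (d + e)"
    by (auto simp: mons_eq_def exps_def sum.distrib)
  then have "f x * g x = lincomb (mons_eq n (d + e)) (monom_eval n) w x" for x
    unfolding f g lincomb_def sum_product sum.cartesian_product w_def
    by (subst sum_regroup[symmetric]) (auto simp: finite_mons_eq monom_eval_add intro!: sum.cong)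
  then show ?thesis by (auto simp: is_form_iff_lincomb)
qed

lemma form_power: "is_form n d f \<Longrightarrow> is_form n (d * k) (\<lambda>x. f x ^ k)"
proof (induction k)
  case 0 then show ?case using form_const[of n 1] by simp
next
  case (Suc k)
  from form_mult[OF Suc.prems Suc.IH[OF Suc.prems]] show ?case by (simp add: algebra_simps)
qed

lemma form_prod:
  "finite A \<Longrightarrow> (\<And>a. a \<in> A \<Longrightarrow> is_form n (d a) (f a)) \<Longrightarrow> is_form n (\<Sum>a\<in>A. d a) (\<lambda>x. \<Prod>a\<in>A. f a x)"
  by (induction A rule: finite_induct) (auto intro: form_mult form_const[of n 1, simplified])

lemma form_compose_linear:
  assumes f: "is_form n d f" and L: "\<And>i. i < n \<Longrightarrow> is_form n 1 (\<lambda>x. L x i)"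
  shows "is_form n d (\<lambda>x. f (L x))"
proof -
  obtain c where c: "f = lincomb (mons_eq n d) (monom_eval n) c"
    using f by (auto simp: is_form_iff_lincomb)
  have "is_form n d (\<lambda>x. monom_eval n \<alpha> (L x))" if "\<alpha> \<in> mons_eq n d" for \<alpha>
  proof -
    have "is_form n (\<Sum>i<n. 1 * \<alpha> i) (\<lambda>x. \<Prod>i<n. L x i ^ \<alpha> i)"
      by (intro form_prod form_power L) auto
    then show ?thesis using that by (simp add: monom_eval_def mons_eq_def)
  qed
  then show ?thesis unfolding c lincomb_def
    by (intro form_sum finite_mons_eq form_smult)
qed

lemma form_linear_combination_of_two_vars:
  "i < n \<Longrightarrow> j < n \<Longrightarrow> is_form n 1 (\<lambda>x. a * x i + b * x j)"
  by (intro form_add form_smult form_var)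

lemma form_imp_poly:
  assumes "is_form n d f" shows "is_poly n f"
proof -
  obtain c where c: "f = lincomb (mons_eq n d) (monom_eval n) c"
    using assms by (auto simp: is_form_iff_lincomb)
  have "f x = (\<Sum>\<alpha>\<in>mons_le n d. (if \<alpha> \<in> mons_eq n d then c \<alpha> else 0) * monom_eval n \<alpha> x)" for x
    unfolding c lincomb_def
    by (rule sum.mono_neutral_cong_left[OF finite_mons_le mons_eq_subset_mons_le]) auto
  then show ?thesis unfolding is_poly_def
    by (intro exI[of _ d] exI[of _ "\<lambda>\<alpha>. if \<alpha> \<in> mons_eq n d then c \<alpha> else 0"]) blast
qed

lemma poly_isCont_line:
  assumes "is_poly n f" shows "isCont (\<lambda>s. f (\<lambda>i. u i + s * v i)) s0"
proof -
  obtain D c where "\<And>x. f x = (\<Sum>\<alpha>\<in>mons_le n D. c \<alpha> * monom_eval n \<alpha> x)"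
    using assms unfolding is_poly_def by blast
  then show ?thesis unfolding monom_eval_def by (simp add: continuous_intros)
qed

lemma poly_eq_if_eq_off_hyperplane:
  assumes "is_poly n f" "is_poly n g" and eq: "\<And>x. x k \<noteq> 0 \<Longrightarrow> f x = g x"
  shows "f x = g x"
proof -
  define line where "line s = (\<lambda>i. (x(k := 0)) i + s * (if i = k then 1 else 0))" for s :: real
  have line: "line s = x(k := s)" for s by (auto simp: line_def)
  have "isCont (\<lambda>s. f (line s)) (x k)" "isCont (\<lambda>s. g (line s)) (x k)"
    unfolding line_def by (rule poly_isCont_line[OF assms(1)], rule poly_isCont_line[OF assms(2)])
  then have f_lim: "((\<lambda>s. f (line s)) \<longlongrightarrow> f (line (x k))) (at (x k))"
    and g_lim: "((\<lambda>s. g (line s)) \<longlongrightarrow> g (line (x k))) (at (x k))"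
    by (simp_all add: isCont_def)
  have "\<forall>\<^sub>F s in at (x k). f (line s) = g (line s)"
    using eventually_neq_at_within[of 0] by eventually_elim (simp add: line eq)
  with f_lim have "((\<lambda>s. g (line s)) \<longlongrightarrow> f (line (x k))) (at (x k))"
    by (rule tendsto_cong[THEN iffD1, rotated])
  with g_lim have "f (line (x k)) = g (line (x k))"
    by (intro tendsto_unique[OF at_neq_bot])
  then show ?thesis by (simp add: line)
qed

section \<open>Homogeneous components\<close>

lemma poly_coeffs_zero_below_order:
  fixes b :: "nat \<Rightarrow> real"
  assumes bound: "\<forall>\<^sub>F s in at 0. \<bar>\<Sum>i\<le>K. b i * s ^ i\<bar> \<le> C * \<bar>s\<bar> ^ k"
  shows "j < k \<Longrightarrow> j \<le> K \<Longrightarrow> b j = 0"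
proof (induction j rule: less_induct)
  case (less j)
  define g where "g s = (\<Sum>i\<in>{j..K}. b i * s ^ (i - j))" for s :: real
  have split: "(\<Sum>i\<le>K. b i * s ^ i) = s ^ j * g s" for s
  proof -
    have "{..K} = {..<j} \<union> {j..K}" using less.prems by auto
    then have "(\<Sum>i\<le>K. b i * s ^ i) = (\<Sum>i<j. b i * s ^ i) + (\<Sum>i\<in>{j..K}. b i * s ^ i)"
      by (simp add: sum.union_disjoint ivl_disj_int)
    also have "(\<Sum>i<j. b i * s ^ i) = 0"
      using less by (intro sum.neutral) auto
    also have "(\<Sum>i\<in>{j..K}. b i * s ^ i) = s ^ j * g s"
      unfolding g_def sum_distrib_left by (intro sum.cong refl) (simp add: power_add[symmetric])
    finally show ?thesis by simp
  qed
  have "g 0 = (\<Sum>i\<in>{j..K}. if i = j then b i else 0)"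
    unfolding g_def by (intro sum.cong refl) auto
  also have "\<dots> = b j" using less.prems by (simp add: sum.delta)
  finally have g0: "g 0 = b j" .
  have "(g \<longlongrightarrow> g 0) (at 0)"
    unfolding g_def by (intro tendsto_intros)
  moreover have "(g \<longlongrightarrow> 0) (at 0)"
  proof (rule Lim_null_comparison)
    show "\<forall>\<^sub>F s in at 0. norm (g s) \<le> C * \<bar>s\<bar> ^ (k - j)"
      using bound eventually_neq_at_within[of 0]
    proof eventually_elim
      case (elim s)
      have "\<bar>s\<bar> ^ j * \<bar>g s\<bar> \<le> \<bar>s\<bar> ^ j * (C * \<bar>s\<bar> ^ (k - j))"
        using elim(1) less.prems
        by (simp add: split abs_mult power_abs power_add[symmetric] algebra_simps)
      then show ?case using elim(2) by simp
    qed
    have "((\<lambda>s::real. C * \<bar>s\<bar> ^ (k - j)) \<longlongrightarrow> C * \<bar>0\<bar> ^ (k - j)) (at 0)"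
      by (intro tendsto_intros)
    then show "((\<lambda>s::real. C * \<bar>s\<bar> ^ (k - j)) \<longlongrightarrow> 0) (at 0)"
      using less.prems by (simp add: power_0_left)
  qed
  ultimately show ?case using g0 tendsto_unique[OF at_neq_bot] by metis
qed

text \<open>Reversing the coefficients turns growth at infinity into vanishing order at zero.\<close>

lemma poly_coeffs_zero_above_growth:
  fixes b :: "nat \<Rightarrow> real"
  assumes bound: "\<And>t. t \<noteq> 0 \<Longrightarrow> \<bar>\<Sum>i\<le>K. b i * t ^ i\<bar> \<le> C * \<bar>t\<bar> ^ k"
    and "k < j" "j \<le> K"
  shows "b j = 0"
proof -
  have reversed: "\<bar>\<Sum>i\<le>K. b (K - i) * s ^ i\<bar> \<le> C * \<bar>s\<bar> ^ (K - k)" if "s \<noteq> 0" for s :: real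
  proof -
    have "(\<Sum>i\<le>K. b (K - i) * s ^ i) = (\<Sum>i\<le>K. b i * s ^ (K - i))"
      by (rule sum.reindex_bij_witness[where i="\<lambda>i. K - i" and j="\<lambda>i. K - i"]) auto
    also have "\<dots> = s ^ K * (\<Sum>i\<le>K. b i * (inverse s) ^ i)"
      unfolding sum_distrib_left
    proof (intro sum.cong refl)
      fix i assume "i \<in> {..K}"
      then have "s ^ K = s ^ (K - i) * s ^ i" by (simp add: power_add[symmetric])
      then show "b i * s ^ (K - i) = s ^ K * (b i * inverse s ^ i)"
        using that by (simp add: power_inverse field_simps)
    qed
    finally have "\<bar>\<Sum>i\<le>K. b (K - i) * s ^ i\<bar> = \<bar>s\<bar> ^ K * \<bar>\<Sum>i\<le>K. b i * (inverse s) ^ i\<bar>"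
      by (simp add: abs_mult power_abs)
    also have "\<dots> \<le> \<bar>s\<bar> ^ K * (C * \<bar>inverse s\<bar> ^ k)"
      using that by (intro mult_left_mono bound) simp_all
    also have "\<dots> = C * \<bar>s\<bar> ^ (K - k)"
    proof -
      have "\<bar>s\<bar> ^ K = \<bar>s\<bar> ^ (K - k) * \<bar>s\<bar> ^ k" using assms(2,3) by (simp add: power_add[symmetric])
      then show ?thesis using that by (simp add: power_inverse abs_inverse field_simps)
    qed
    finally show ?thesis .
  qed
  have "\<forall>\<^sub>F s in at 0. \<bar>\<Sum>i\<le>K. b (K - i) * s ^ i\<bar> \<le> C * \<bar>s\<bar> ^ (K - k)"
    using eventually_neq_at_within[of 0] by eventually_elim (rule reversed)
  from poly_coeffs_zero_below_order[where b="\<lambda>i. b (K - i)", OF this, of "K - j"]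
  show ?thesis using assms(2,3) by simp
qed

lemma poly_scale_expansion:
  assumes g: "\<And>x. g x = (\<Sum>\<alpha>\<in>mons_le n E. c \<alpha> * monom_eval n \<alpha> x)"
  shows "g (\<lambda>i. t * x i) = (\<Sum>j\<le>E. lincomb (mons_eq n j) (monom_eval n) c x * t ^ j)"
proof -
  have "g (\<lambda>i. t * x i) = (\<Sum>\<alpha>\<in>mons_le n E. (c \<alpha> * monom_eval n \<alpha> x) * t ^ (\<Sum>i<n. \<alpha> i))"
    unfolding g by (intro sum.cong refl) (simp add: monom_eval_scale)
  also have "\<dots> = (\<Sum>j\<le>E. (\<Sum>\<alpha>\<in>{\<alpha>\<in>mons_le n E. (\<Sum>i<n. \<alpha> i) = j}. c \<alpha> * monom_eval n \<alpha> x) * t ^ j)"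
    by (rule sum_regroup[OF finite_mons_le]) (auto simp: mons_le_def)
  also have "\<dots> = (\<Sum>j\<le>E. lincomb (mons_eq n j) (monom_eval n) c x * t ^ j)"
  proof (intro sum.cong refl)
    fix j assume "j \<in> {..E}"
    then have "{\<alpha>\<in>mons_le n E. (\<Sum>i<n. \<alpha> i) = j} = mons_eq n j"
      by (auto simp: mons_le_def mons_eq_def)
    then show "(\<Sum>\<alpha>\<in>{\<alpha>\<in>mons_le n E. (\<Sum>i<n. \<alpha> i) = j}. c \<alpha> * monom_eval n \<alpha> x) * t ^ j
        = lincomb (mons_eq n j) (monom_eval n) c x * t ^ j"
      by (simp add: lincomb_def)
  qed
  finally show ?thesis .
qed

text \<open>Along each ray, \<open>g\<close> is bounded by a multiple of \<open>\<bar>t\<bar> ^ D\<close>, which kills every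
  homogeneous component of \<open>g\<close> except the one of degree \<open>D\<close>.\<close>

lemma form_if_square_le_form:
  assumes F: "is_form n (2 * D) F" and g: "is_poly n g" and bound: "\<And>x. (g x)\<^sup>2 \<le> F x"
  shows "is_form n D g"
proof -
  obtain E c where gc: "\<And>x. g x = (\<Sum>\<alpha>\<in>mons_le n E. c \<alpha> * monom_eval n \<alpha> x)"
    using g unfolding is_poly_def by blast
  define G where "G j = lincomb (mons_eq n j) (monom_eval n) c" for j
  have growth: "\<bar>\<Sum>j\<le>E. G j x * t ^ j\<bar> \<le> sqrt (F x) * \<bar>t\<bar> ^ D" for t x
  proof -
    have "(g (\<lambda>i. t * x i))\<^sup>2 \<le> (t ^ D)\<^sup>2 * F x"
      using bound[of "\<lambda>i. t * x i"] form_homogeneous[OF F]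
      by (simp add: power_mult power2_eq_square mult_ac)
    then have "\<bar>g (\<lambda>i. t * x i)\<bar> \<le> sqrt ((t ^ D)\<^sup>2 * F x)"
      by (intro real_le_rsqrt) simp
    then show ?thesis
      using poly_scale_expansion[OF gc] by (simp add: G_def real_sqrt_mult power_abs mult_ac)
  qed
  have components: "G j x = 0" if "j \<noteq> D" "j \<le> E" for j x
  proof (cases "j < D")
    case True
    show ?thesis
      by (rule poly_coeffs_zero_below_order[where b="\<lambda>j. G j x"])
        (use growth True that in \<open>auto intro: always_eventually\<close>)
  next
    case False
    then show ?thesis
      using poly_coeffs_zero_above_growth[where b="\<lambda>j. G j x", OF growth] that by simp
  qed
  have "g x = (\<Sum>j\<le>E. G j x)" for x
    using poly_scale_expansion[OF gc, of 1 x] by (simp add: G_def)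
  also have "\<dots> x = (\<Sum>j\<le>E. if j = D then G j x else 0)" for x
    using components by (intro sum.cong) auto
  finally have "g = (if D \<le> E then G D else (\<lambda>x. 0))"
    by (auto simp: sum.delta fun_eq_iff)
  then show ?thesis
    using form_zero[of n D] by (cases "D \<le> E") (auto simp: G_def is_form_iff_lincomb)
qed

definition sos_of_forms :: "nat \<Rightarrow> nat \<Rightarrow> ((nat \<Rightarrow> real) \<Rightarrow> real) \<Rightarrow> bool" where
  "sos_of_forms n D f \<longleftrightarrow> (\<exists>gs. (\<forall>g\<in>set gs. is_form n D g) \<and> (\<forall>x. f x = (\<Sum>g\<leftarrow>gs. (g x)\<^sup>2)))"

lemma sos_if_sos_of_forms: "sos_of_forms n D f \<Longrightarrow> is_sos n f"
  unfolding sos_of_forms_def is_sos_def by (metis form_imp_poly)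

lemma sos_of_forms_if_sos:
  assumes "is_form n (2 * D) f" "is_sos n f" shows "sos_of_forms n D f"
proof -
  obtain gs where gs: "\<forall>g\<in>set gs. is_poly n g" "\<forall>x. f x = (\<Sum>g\<leftarrow>gs. (g x)\<^sup>2)"
    using assms(2) unfolding is_sos_def by blast
  have "(g x)\<^sup>2 \<le> f x" if "g \<in> set gs" for g x
  proof -
    have "(g x)\<^sup>2 \<in> set (map (\<lambda>g. (g x)\<^sup>2) gs)" using that by simp
    then have "(g x)\<^sup>2 \<le> (\<Sum>g\<leftarrow>gs. (g x)\<^sup>2)" by (rule member_le_sum_list) auto
    then show ?thesis using gs(2) by simp
  qed
  then have "\<forall>g\<in>set gs. is_form n D g"
    using gs(1) form_if_square_le_form[OF assms(1)] by blast
  with gs(2) show ?thesis unfolding sos_of_forms_def by blast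
qed

lemma sos_of_forms_compose_linear:
  assumes "sos_of_forms n D f" "\<And>i. i < n \<Longrightarrow> is_form n 1 (\<lambda>x. L x i)"
  shows "sos_of_forms n D (\<lambda>x. f (L x))"
proof -
  obtain gs where gs: "\<forall>g\<in>set gs. is_form n D g" "\<forall>x. f x = (\<Sum>g\<leftarrow>gs. (g x)\<^sup>2)"
    using assms(1) unfolding sos_of_forms_def by blast
  have "\<forall>g\<in>set (map (\<lambda>g x. g (L x)) gs). is_form n D g"
    using gs(1) form_compose_linear assms(2) by auto
  moreover have "f (L x) = (\<Sum>g\<leftarrow>map (\<lambda>g x. g (L x)) gs. (g x)\<^sup>2)" for x
    using gs(2) by (simp add: o_def)
  ultimately show ?thesis unfolding sos_of_forms_def by blast
qed

section \<open>Linear independence of monomials\<close>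

lemma monom_eval_Suc: "monom_eval (Suc n) \<beta> x = monom_eval n \<beta> x * x n ^ \<beta> n"
  by (simp add: monom_eval_def)

text \<open>Expanding in the last variable, a vanishing combination of monomials becomes a univariate
  polynomial in \<open>x\<^sub>n\<close> that vanishes identically, so each of its coefficients vanishes.\<close>

lemma lincomb_monoms_slice_eq_0:
  assumes "finite A" "\<And>x. lincomb A (monom_eval (Suc n)) c x = 0"
  shows "lincomb {\<beta>\<in>A. \<beta> n = j} (monom_eval n) c x = 0"
proof -
  define K where "K = Max (insert j ((\<lambda>\<beta>. \<beta> n) ` A))"
  define B where "B j = lincomb {\<beta>\<in>A. \<beta> n = j} (monom_eval n) c" for j
  have "lincomb A (monom_eval (Suc n)) c x = (\<Sum>j\<le>K. B j x * x n ^ j)" for x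
  proof -
    have "lincomb A (monom_eval (Suc n)) c x = (\<Sum>\<beta>\<in>A. (c \<beta> * monom_eval n \<beta> x) * x n ^ \<beta> n)"
      by (simp add: lincomb_def monom_eval_Suc mult_ac)
    also have "\<dots> = (\<Sum>j\<le>K. B j x * x n ^ j)"
      unfolding B_def lincomb_def by (rule sum_regroup) (use assms(1) in \<open>auto simp: K_def\<close>)
    finally show ?thesis .
  qed
  moreover have "B j (x(n := s)) = B j x" for j s
    by (simp add: B_def lincomb_def monom_eval_def)
  ultimately have "(\<Sum>j\<le>K. B j x * s ^ j) = lincomb A (monom_eval (Suc n)) c (x(n := s))" for s
    by simp
  then have "\<forall>s. (\<Sum>j\<le>K. B j x * s ^ j) = 0"
    using assms(2) by simp
  moreover have "j \<le> K" using assms(1) by (simp add: K_def)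
  ultimately show ?thesis using polyfun_eq_0[of "\<lambda>j. B j x" K] by (simp add: B_def)
qed

lemma lincomb_monoms_eq_0_imp_coeff_eq_0:
  "finite A \<Longrightarrow> A \<subseteq> exps n \<Longrightarrow> (\<And>x. lincomb A (monom_eval n) c x = 0) \<Longrightarrow> \<alpha> \<in> A \<Longrightarrow> c \<alpha> = 0"
proof (induction n arbitrary: A c \<alpha>)
  case 0
  have "A \<subseteq> {\<lambda>_. 0}" using "0.prems"(2) by (auto simp: exps_def fun_eq_iff)
  with "0.prems"(4) have "A = {\<alpha>}" by blast
  then show ?case using "0.prems"(3)[of undefined] by (simp add: lincomb_def monom_eval_def)
next
  case (Suc n)
  define j where "j = \<alpha> n"
  define Aj where "Aj = {\<beta>\<in>A. \<beta> n = j}"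
  define forget where "forget \<beta> = \<beta>(n := 0)" for \<beta> :: "nat \<Rightarrow> nat"
  have lift: "(forget \<beta>)(n := j) = \<beta>" if "\<beta> \<in> Aj" for \<beta>
    using that by (auto simp: forget_def Aj_def)
  then have inj: "inj_on forget Aj" by (rule inj_on_inverseI[where g="\<lambda>\<beta>. \<beta>(n := j)"])
  have "c ((forget \<alpha>)(n := j)) = 0"
  proof (rule Suc.IH[where A="forget ` Aj" and c="\<lambda>\<gamma>. c (\<gamma>(n := j))"])
    show "finite (forget ` Aj)" using Suc.prems(1) by (simp add: Aj_def)
    show "forget ` Aj \<subseteq> exps n" using Suc.prems(2) by (auto simp: exps_def forget_def Aj_def)
    show "forget \<alpha> \<in> forget ` Aj" using Suc.prems(4) by (auto simp: Aj_def j_def)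
    fix x
    have "lincomb (forget ` Aj) (monom_eval n) (\<lambda>\<gamma>. c (\<gamma>(n := j))) x
        = (\<Sum>\<beta>\<in>Aj. c ((forget \<beta>)(n := j)) * monom_eval n (forget \<beta>) x)"
      by (simp add: lincomb_def sum.reindex[OF inj])
    also have "\<dots> = lincomb Aj (monom_eval n) c x"
      unfolding lincomb_def
    proof (intro sum.cong refl)
      fix \<beta> assume "\<beta> \<in> Aj"
      moreover have "monom_eval n (forget \<beta>) x = monom_eval n \<beta> x"
        by (simp add: monom_eval_def forget_def)
      ultimately show "c ((forget \<beta>)(n := j)) * monom_eval n (forget \<beta>) x = c \<beta> * monom_eval n \<beta> x"
        by (simp add: lift)
    qed
    also have "\<dots> = 0"
      unfolding Aj_def by (rule lincomb_monoms_slice_eq_0[OF Suc.prems(1,3)])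
    finally show "lincomb (forget ` Aj) (monom_eval n) (\<lambda>\<gamma>. c (\<gamma>(n := j))) x = 0" .
  qed
  then show ?case using lift Suc.prems(4) by (simp add: Aj_def j_def)
qed

section \<open>Sums of squares from a finite-dimensional space\<close>

lemma lincomb_combine:
  "lincomb S \<phi> (\<lambda>\<alpha>. a * c \<alpha> + b * u \<alpha>) x = a * lincomb S \<phi> c x + b * lincomb S \<phi> u x"
  by (simp add: lincomb_def sum.distrib sum_distrib_left algebra_simps)

definition sos_of_span :: "nat \<Rightarrow> 'a set \<Rightarrow> ('a \<Rightarrow> 'x \<Rightarrow> real) \<Rightarrow> ('x \<Rightarrow> real) \<Rightarrow> bool" where
  "sos_of_span N S \<phi> f \<longleftrightarrow> (\<exists>C. \<forall>x. f x = (\<Sum>k<N. (lincomb S \<phi> (C k) x)\<^sup>2))"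

text \<open>A Givens rotation of two squares \<open>X\<^sup>2 + Y\<^sup>2\<close> that kills the coefficient at \<open>\<beta>\<close> in all but one of them.\<close>

lemma sum_squares_lincomb_rotate:
  "\<exists>u vs. (\<forall>v\<in>set vs. v \<beta> = 0) \<and>
     (\<forall>x. (\<Sum>c\<leftarrow>cs. (lincomb S \<phi> c x)\<^sup>2) = (lincomb S \<phi> u x)\<^sup>2 + (\<Sum>v\<leftarrow>vs. (lincomb S \<phi> v x)\<^sup>2))"
proof (induction cs)
  case Nil
  show ?case by (intro exI[of _ "\<lambda>_. 0"] exI[of _ "[]"]) (simp add: lincomb_def)
next
  case (Cons c cs)
  then obtain u vs where uv: "\<forall>v\<in>set vs. v \<beta> = 0"
    "\<forall>x. (\<Sum>c\<leftarrow>cs. (lincomb S \<phi> c x)\<^sup>2) = (lincomb S \<phi> u x)\<^sup>2 + (\<Sum>v\<leftarrow>vs. (lincomb S \<phi> v x)\<^sup>2)"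
    by blast
  define a where "a = c \<beta>"
  define b where "b = u \<beta>"
  show ?case
  proof (cases "a = 0 \<and> b = 0")
    case True
    then show ?thesis using uv by (intro exI[of _ u] exI[of _ "c # vs"]) (auto simp: a_def)
  next
    case False
    define \<rho> where "\<rho> = sqrt (a\<^sup>2 + b\<^sup>2)"
    have \<rho>: "\<rho> > 0" "\<rho>\<^sup>2 = a\<^sup>2 + b\<^sup>2"
      using False by (auto simp: \<rho>_def sum_power2_gt_zero_iff)
    define u' where "u' = (\<lambda>\<alpha>. (a / \<rho>) * c \<alpha> + (b / \<rho>) * u \<alpha>)"
    define w where "w = (\<lambda>\<alpha>. (- b / \<rho>) * c \<alpha> + (a / \<rho>) * u \<alpha>)"
    show ?thesis
    proof (intro exI[of _ u'] exI[of _ "w # vs"] conjI allI)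
      show "\<forall>v\<in>set (w # vs). v \<beta> = 0" using uv(1) by (simp add: w_def a_def b_def algebra_simps)
      fix x
      define X where "X = lincomb S \<phi> c x"
      define Y where "Y = lincomb S \<phi> u x"
      have "(lincomb S \<phi> u' x)\<^sup>2 + (lincomb S \<phi> w x)\<^sup>2 = ((a * X + b * Y)\<^sup>2 + (- b * X + a * Y)\<^sup>2) / \<rho>\<^sup>2"
        unfolding u'_def w_def lincomb_combine X_def Y_def using \<rho>(1) by (simp add: field_simps power2_eq_square)
      also have "\<dots> = (X\<^sup>2 + Y\<^sup>2) * \<rho>\<^sup>2 / \<rho>\<^sup>2"
        unfolding \<rho>(2) by (simp add: power2_eq_square algebra_simps)
      also have "\<dots> = X\<^sup>2 + Y\<^sup>2"
        using \<rho>(1) by simp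
      finally show "(\<Sum>c\<leftarrow>c # cs. (lincomb S \<phi> c x)\<^sup>2) = (lincomb S \<phi> u' x)\<^sup>2 + (\<Sum>v\<leftarrow>w # vs. (lincomb S \<phi> v x)\<^sup>2)"
        using uv(2) by (simp add: X_def Y_def)
    qed
  qed
qed

lemma sos_of_span_card_coeffs:
  "finite S \<Longrightarrow> sos_of_span (card S) S \<phi> (\<lambda>x. \<Sum>c\<leftarrow>cs. (lincomb S \<phi> c x)\<^sup>2)"
proof (induction S arbitrary: cs rule: finite_induct)
  case empty
  show ?case by (simp add: sos_of_span_def lincomb_def)
next
  case (insert \<beta> S)
  obtain u vs where uv: "\<forall>v\<in>set vs. v \<beta> = 0"
    "\<forall>x. (\<Sum>c\<leftarrow>cs. (lincomb (insert \<beta> S) \<phi> c x)\<^sup>2)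
        = (lincomb (insert \<beta> S) \<phi> u x)\<^sup>2 + (\<Sum>v\<leftarrow>vs. (lincomb (insert \<beta> S) \<phi> v x)\<^sup>2)"
    using sum_squares_lincomb_rotate[where \<beta>=\<beta> and cs=cs and S="insert \<beta> S" and \<phi>=\<phi>] by blast
  obtain C where C: "\<forall>x. (\<Sum>v\<leftarrow>vs. (lincomb S \<phi> v x)\<^sup>2) = (\<Sum>k<card S. (lincomb S \<phi> (C k) x)\<^sup>2)"
    using insert.IH[of vs] by (auto simp: sos_of_span_def)
  have drop_\<beta>: "lincomb (insert \<beta> S) \<phi> v x = lincomb S \<phi> v x" if "v \<beta> = 0" for v x
    using insert.hyps that by (simp add: lincomb_def)
  have vs: "(\<Sum>v\<leftarrow>vs. (lincomb (insert \<beta> S) \<phi> v x)\<^sup>2) = (\<Sum>v\<leftarrow>vs. (lincomb S \<phi> v x)\<^sup>2)" for x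
    using uv(1) drop_\<beta> by (intro arg_cong[where f=sum_list] map_cong) auto
  have C_upd: "lincomb S \<phi> ((C k)(\<beta> := 0)) x = lincomb S \<phi> (C k) x" for k x
    using insert.hyps unfolding lincomb_def by (intro sum.cong refl) auto
  define C' where "C' k = (if k = 0 then u else (C (k - 1))(\<beta> := 0))" for k
  have "(\<Sum>k<card (insert \<beta> S). (lincomb (insert \<beta> S) \<phi> (C' k) x)\<^sup>2)
      = (lincomb (insert \<beta> S) \<phi> u x)\<^sup>2 + (\<Sum>k<card S. (lincomb S \<phi> (C k) x)\<^sup>2)" for x
    using insert.hyps unfolding card_insert_disjoint[OF insert.hyps] sum.lessThan_Suc_shift
    by (simp add: C'_def drop_\<beta> C_upd)
  then show ?case
    using uv(2) C vs unfolding sos_of_span_def by (intro exI[of _ C']) simp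
qed

lemma sos_of_span_card:
  assumes "finite S" "\<forall>g\<in>set gs. g \<in> range (lincomb S \<phi>)"
  shows "sos_of_span (card S) S \<phi> (\<lambda>x. \<Sum>g\<leftarrow>gs. (g x)\<^sup>2)"
proof -
  obtain cs where "gs = map (lincomb S \<phi>) cs"
    using assms(2) ex_map_conv[of gs "lincomb S \<phi>"] by auto
  then show ?thesis using sos_of_span_card_coeffs[OF assms(1), of \<phi> cs] by (simp add: o_def)
qed

lemma sos_of_span_mons_if_sos_of_forms:
  assumes "sos_of_forms n D f"
  shows "sos_of_span (card (mons_eq n D)) (mons_eq n D) (monom_eval n) f"
proof -
  obtain gs where gs: "\<forall>g\<in>set gs. is_form n D g" "\<forall>x. f x = (\<Sum>g\<leftarrow>gs. (g x)\<^sup>2)"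
    using assms unfolding sos_of_forms_def by blast
  then have "f = (\<lambda>x. \<Sum>g\<leftarrow>gs. (g x)\<^sup>2)" by blast
  moreover have "\<forall>g\<in>set gs. g \<in> range (lincomb (mons_eq n D) (monom_eval n))"
    using gs(1) by (auto simp: is_form_iff_lincomb)
  ultimately show ?thesis using sos_of_span_card[OF finite_mons_eq] by simp
qed

lemma sos_of_forms_if_sos_of_span_mons:
  assumes "sos_of_span N (mons_eq n D) (monom_eval n) f"
  shows "sos_of_forms n D f"
proof -
  obtain C where C: "\<forall>x. f x = (\<Sum>k<N. (lincomb (mons_eq n D) (monom_eval n) (C k) x)\<^sup>2)"
    using assms unfolding sos_of_span_def by blast
  define gs where "gs = map (\<lambda>k. lincomb (mons_eq n D) (monom_eval n) (C k)) [0..<N]"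
  have "\<forall>g\<in>set gs. is_form n D g"
    by (auto simp: gs_def is_form_iff_lincomb)
  moreover have "f x = (\<Sum>g\<leftarrow>gs. (g x)\<^sup>2)" for x
    using C by (simp add: gs_def o_def sum_list_sum_nth atLeast0LessThan)
  ultimately show ?thesis unfolding sos_of_forms_def by blast
qed

lemma sos_of_span_scale:
  assumes "sos_of_span N S \<phi> f" "0 \<le> a"
  shows "sos_of_span N S \<phi> (\<lambda>x. a * f x)"
proof -
  obtain C where C: "\<forall>x. f x = (\<Sum>k<N. (lincomb S \<phi> (C k) x)\<^sup>2)"
    using assms(1) unfolding sos_of_span_def by blast
  have "a * f x = (\<Sum>k<N. (lincomb S \<phi> (\<lambda>\<alpha>. sqrt a * C k \<alpha>) x)\<^sup>2)" for x
    using C assms(2)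
    by (simp add: lincomb_def sum_distrib_left[symmetric] power_mult_distrib mult.assoc)
  then show ?thesis unfolding sos_of_span_def by (intro exI[of _ "\<lambda>k \<alpha>. sqrt a * C k \<alpha>"]) blast
qed

lemma bounded_seqs_convergent_subseq:
  fixes f :: "nat \<Rightarrow> 'i \<Rightarrow> real"
  assumes "finite I" "\<And>j i. i \<in> I \<Longrightarrow> \<bar>f j i\<bar> \<le> B"
  shows "\<exists>r L. strict_mono r \<and> (\<forall>i\<in>I. (\<lambda>j. f (r j) i) \<longlonglongrightarrow> L i)"
  using assms
proof (induction I rule: finite_induct)
  case empty
  show ?case by (intro exI[of _ id]) (auto simp: strict_mono_def)
next
  case (insert i0 I)
  then obtain r L where r: "strict_mono r" "\<forall>i\<in>I. (\<lambda>j. f (r j) i) \<longlonglongrightarrow> L i" by blast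
  have "bounded (range (\<lambda>j. f (r j) i0))"
    unfolding bounded_iff using insert.prems by (intro exI[of _ B]) auto
  then obtain l r' where r': "strict_mono r'" "((\<lambda>j. f (r j) i0) \<circ> r') \<longlonglongrightarrow> l"
    using bounded_imp_convergent_subsequence by blast
  have "(\<lambda>j. f ((r \<circ> r') j) i) \<longlonglongrightarrow> (L(i0 := l)) i" if "i \<in> insert i0 I" for i
  proof (cases "i = i0")
    case True then show ?thesis using r'(2) by (simp add: o_def)
  next
    case False
    then have "((\<lambda>j. f (r j) i) \<circ> r') \<longlonglongrightarrow> L i"
      using that r(2) r'(1) by (intro LIMSEQ_subseq_LIMSEQ) auto
    with False show ?thesis by (simp add: o_def)
  qed
  moreover have "strict_mono (r \<circ> r')" using r(1) r'(1) by (simp add: strict_mono_def)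
  ultimately show ?case by blast
qed

lemma lincomb_squares_eq_0_imp_coeffs_eq_0:
  fixes N :: nat
  assumes indep: "\<And>c. (\<And>x. lincomb S \<phi> c x = 0) \<Longrightarrow> \<forall>\<alpha>\<in>S. c \<alpha> = 0"
    and zero: "\<And>x. (\<Sum>k<N. (lincomb S \<phi> (C k) x)\<^sup>2) = 0"
    and "k < N" "\<alpha> \<in> S"
  shows "C k \<alpha> = 0"
proof -
  have "lincomb S \<phi> (C k) x = 0" for x
  proof -
    have "(lincomb S \<phi> (C k) x)\<^sup>2 \<le> (\<Sum>k<N. (lincomb S \<phi> (C k) x)\<^sup>2)"
      using \<open>k < N\<close> by (intro member_le_sum) auto
    then show ?thesis using zero[of x] by simp
  qed
  then show ?thesis using indep \<open>\<alpha> \<in> S\<close> by blast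
qed

text \<open>Rescaling by \<open>\<mu> j\<close> makes the coefficients bounded, so a subsequence converges; if \<open>\<mu>\<close> tends
  to \<open>0\<close>, the rescaled coefficients keep total size \<open>1 - \<mu> j \<longrightarrow> 1\<close>.\<close>

lemma rescaled_coeffs_convergent_subseq:
  fixes C :: "nat \<Rightarrow> nat \<Rightarrow> 'a \<Rightarrow> real" and N :: nat
  assumes S: "finite S" and \<mu>_def: "\<And>j. \<mu> j = 1 / (1 + (\<Sum>k<N. \<Sum>\<alpha>\<in>S. \<bar>C j k \<alpha>\<bar>))"
  obtains r \<mu>0 D0 where "strict_mono r" "(\<lambda>j. \<mu> (r j)) \<longlonglongrightarrow> \<mu>0"
    "\<And>k \<alpha>. k < N \<Longrightarrow> \<alpha> \<in> S \<Longrightarrow> (\<lambda>j. \<mu> (r j) * C (r j) k \<alpha>) \<longlonglongrightarrow> D0 k \<alpha>"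
    "\<mu>0 = 0 \<Longrightarrow> (\<Sum>k<N. \<Sum>\<alpha>\<in>S. \<bar>D0 k \<alpha>\<bar>) = 1"
proof -
  define D where "D j k \<alpha> = \<mu> j * C j k \<alpha>" for j k \<alpha>
  have M_nonneg: "0 \<le> (\<Sum>k<N. \<Sum>\<alpha>\<in>S. \<bar>C j k \<alpha>\<bar>)" for j by (intro sum_nonneg) auto
  have \<mu>: "0 < \<mu> j" "\<mu> j \<le> 1" for j using M_nonneg[of j] by (auto simp: \<mu>_def)
  have D_sum: "(\<Sum>k<N. \<Sum>\<alpha>\<in>S. \<bar>D j k \<alpha>\<bar>) = 1 - \<mu> j" for j
    using M_nonneg[of j] \<mu>(1)[of j]
    by (simp add: D_def abs_mult sum_distrib_left[symmetric]) (simp add: \<mu>_def field_simps)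
  have D_le: "\<bar>D j k \<alpha>\<bar> \<le> 1" if "k < N" "\<alpha> \<in> S" for j k \<alpha>
  proof -
    have "\<bar>D j k \<alpha>\<bar> \<le> (\<Sum>k<N. \<Sum>\<alpha>\<in>S. \<bar>D j k \<alpha>\<bar>)"
      using S that by (intro order.trans[OF member_le_sum member_le_sum[of k]]) (auto intro: sum_nonneg)
    then show ?thesis using D_sum[of j] \<mu>(1)[of j] by simp
  qed
  define I where "I = insert None (Some ` ({..<N} \<times> S))"
  define f where "f j i = (case i of None \<Rightarrow> \<mu> j | Some (k, \<alpha>) \<Rightarrow> D j k \<alpha>)" for j i
  have "\<bar>f j i\<bar> \<le> 1" if "i \<in> I" for j i
    using that \<mu>[of j] D_le by (auto simp: f_def I_def)
  then obtain r L where r: "strict_mono r" and L: "\<forall>i\<in>I. (\<lambda>j. f (r j) i) \<longlonglongrightarrow> L i"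
    using bounded_seqs_convergent_subseq[of I f 1] S by (auto simp: I_def)
  have \<mu>_lim: "(\<lambda>j. \<mu> (r j)) \<longlonglongrightarrow> L None" using L by (auto simp: f_def I_def)
  have D_lim: "(\<lambda>j. D (r j) k \<alpha>) \<longlonglongrightarrow> L (Some (k, \<alpha>))" if "k < N" "\<alpha> \<in> S" for k \<alpha>
    using L that by (auto simp: f_def I_def)
  have "(\<lambda>j. 1 - \<mu> (r j)) \<longlonglongrightarrow> (\<Sum>k<N. \<Sum>\<alpha>\<in>S. \<bar>L (Some (k, \<alpha>))\<bar>)"
    unfolding D_sum[symmetric] by (intro tendsto_intros D_lim) auto
  moreover have "(\<lambda>j. 1 - \<mu> (r j)) \<longlonglongrightarrow> 1 - L None"
    by (intro tendsto_intros \<mu>_lim)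
  ultimately have "(\<Sum>k<N. \<Sum>\<alpha>\<in>S. \<bar>L (Some (k, \<alpha>))\<bar>) = 1 - L None"
    by (rule LIMSEQ_unique)
  moreover have "(\<lambda>j. \<mu> (r j) * C (r j) k \<alpha>) \<longlonglongrightarrow> L (Some (k, \<alpha>))" if "k < N" "\<alpha> \<in> S" for k \<alpha>
    using D_lim[OF that] by (simp add: D_def)
  ultimately show ?thesis
    using that[of r "L None" "\<lambda>k \<alpha>. L (Some (k, \<alpha>))"] r \<mu>_lim by simp
qed

text \<open>Closedness of the cone of sums of \<open>N\<close> squares from a finite-dimensional space: by
  independence of the \<open>\<phi> \<alpha>\<close>, the limit of the rescaling factors cannot be \<open>0\<close>.\<close>

lemma sos_of_span_limit:
  assumes S: "finite S"
    and indep: "\<And>c. (\<And>x. lincomb S \<phi> c x = 0) \<Longrightarrow> \<forall>\<alpha>\<in>S. c \<alpha> = 0"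
    and F: "\<And>j. sos_of_span N S \<phi> (F j)"
    and lim: "\<And>x. (\<lambda>j. F j x) \<longlonglongrightarrow> G x"
  shows "sos_of_span N S \<phi> G"
proof -
  obtain C where rep: "\<And>j x. F j x = (\<Sum>k<N. (lincomb S \<phi> (C j k) x)\<^sup>2)"
    using F unfolding sos_of_span_def by metis
  define \<mu> where "\<mu> j = 1 / (1 + (\<Sum>k<N. \<Sum>\<alpha>\<in>S. \<bar>C j k \<alpha>\<bar>))" for j
  obtain r \<mu>0 D0 where r: "strict_mono r" and \<mu>_lim: "(\<lambda>j. \<mu> (r j)) \<longlonglongrightarrow> \<mu>0"
    and D_lim: "\<And>k \<alpha>. k < N \<Longrightarrow> \<alpha> \<in> S \<Longrightarrow> (\<lambda>j. \<mu> (r j) * C (r j) k \<alpha>) \<longlonglongrightarrow> D0 k \<alpha>"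
    and D0_sum: "\<mu>0 = 0 \<Longrightarrow> (\<Sum>k<N. \<Sum>\<alpha>\<in>S. \<bar>D0 k \<alpha>\<bar>) = 1"
    by (rule rescaled_coeffs_convergent_subseq[where \<mu>=\<mu> and C=C and N=N, OF S \<mu>_def]) blast
  have limit_identity: "\<mu>0\<^sup>2 * G x = (\<Sum>k<N. (lincomb S \<phi> (D0 k) x)\<^sup>2)" for x
  proof -
    have "(\<mu> j)\<^sup>2 * F j x = (\<Sum>k<N. (lincomb S \<phi> (\<lambda>\<alpha>. \<mu> j * C j k \<alpha>) x)\<^sup>2)" for j
      by (simp add: rep sum_distrib_left lincomb_def power_mult_distrib[symmetric] mult.assoc)
    moreover have "(\<lambda>j. (\<mu> (r j))\<^sup>2 * F (r j) x) \<longlonglongrightarrow> \<mu>0\<^sup>2 * G x"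
      using \<mu>_lim LIMSEQ_subseq_LIMSEQ[OF lim r] by (intro tendsto_intros) (auto simp: o_def)
    moreover have "(\<lambda>j. \<Sum>k<N. (lincomb S \<phi> (\<lambda>\<alpha>. \<mu> (r j) * C (r j) k \<alpha>) x)\<^sup>2)
        \<longlonglongrightarrow> (\<Sum>k<N. (lincomb S \<phi> (D0 k) x)\<^sup>2)"
      unfolding lincomb_def by (intro tendsto_intros D_lim) auto
    ultimately show ?thesis using LIMSEQ_unique by fastforce
  qed
  have "\<mu>0 \<noteq> 0"
  proof
    assume "\<mu>0 = 0"
    then have "D0 k \<alpha> = 0" if "k < N" "\<alpha> \<in> S" for k \<alpha>
      using lincomb_squares_eq_0_imp_coeffs_eq_0[where S=S and \<phi>=\<phi> and N=N and C=D0, OF indep]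
        limit_identity that by simp
    with D0_sum \<open>\<mu>0 = 0\<close> show False by simp
  qed
  then have "G x = (\<Sum>k<N. (lincomb S \<phi> (\<lambda>\<alpha>. D0 k \<alpha> / \<mu>0) x)\<^sup>2)" for x
    using limit_identity[of x]
    by (simp add: lincomb_def sum_divide_distrib[symmetric] power_divide sum_distrib_left field_simps)
  then show ?thesis unfolding sos_of_span_def by (intro exI[of _ "\<lambda>k \<alpha>. D0 k \<alpha> / \<mu>0"]) blast
qed

section \<open>Dividing out a variable\<close>

lemma monom_eval_lower:
  assumes "k < n" "0 < \<alpha> k"
  shows "monom_eval n \<alpha> x = x k * monom_eval n (\<alpha>(k := \<alpha> k - 1)) x"
proof -
  have "\<alpha> = (\<lambda>i. (if i = k then 1 else 0) + (\<alpha>(k := \<alpha> k - 1)) i)"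
    using assms(2) by (auto simp: fun_eq_iff)
  then have "monom_eval n \<alpha> x = monom_eval n (\<lambda>i. if i = k then 1 else 0) x * monom_eval n (\<alpha>(k := \<alpha> k - 1)) x"
    by (metis monom_eval_add)
  then show ?thesis using assms(1) by (simp add: monom_eval_unit)
qed

lemma form_factor_var_if_vanishing:
  assumes f: "is_form n D f" and "k < n" and vanish: "\<And>x. x k = 0 \<Longrightarrow> f x = 0"
  obtains g where "is_form n (D - 1) g" "\<And>x. f x = x k * g x"
proof -
  obtain c where c: "f = lincomb (mons_eq n D) (monom_eval n) c"
    using f by (auto simp: is_form_iff_lincomb)
  define S0 where "S0 = {\<alpha>\<in>mons_eq n D. \<alpha> k = 0}"
  define S1 where "S1 = {\<alpha>\<in>mons_eq n D. 0 < \<alpha> k}"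
  define lower where "lower \<alpha> = \<alpha>(k := \<alpha> k - 1)" for \<alpha> :: "nat \<Rightarrow> nat"
  define g where "g x = (\<Sum>\<alpha>\<in>S1. c \<alpha> * monom_eval n (lower \<alpha>) x)" for x
  have mons: "mons_eq n D = S0 \<union> S1" by (auto simp: S0_def S1_def)
  have split: "f x = (\<Sum>\<alpha>\<in>S0. c \<alpha> * monom_eval n \<alpha> x) + (\<Sum>\<alpha>\<in>S1. c \<alpha> * monom_eval n \<alpha> x)" for x
    unfolding c lincomb_def mons
    by (rule sum.union_disjoint) (use finite_mons_eq in \<open>auto simp: S0_def S1_def\<close>)
  have S1: "monom_eval n \<alpha> x = x k * monom_eval n (lower \<alpha>) x" if "\<alpha> \<in> S1" for \<alpha> x
    using that \<open>k < n\<close> by (simp add: S1_def lower_def monom_eval_lower)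
  have S0: "monom_eval n \<alpha> (x(k := 0)) = monom_eval n \<alpha> x" if "\<alpha> \<in> S0" for \<alpha> x
    using that unfolding monom_eval_def S0_def by (intro prod.cong) auto
  have "(\<Sum>\<alpha>\<in>S0. c \<alpha> * monom_eval n \<alpha> x) = f (x(k := 0))" for x
    by (simp add: split S0 S1)
  then have f_eq: "f x = x k * g x" for x
    using vanish[of "x(k := 0)"] by (simp add: split S1 g_def sum_distrib_left mult_ac)
  have "lower \<alpha> \<in> mons_eq n (D - 1)" if "\<alpha> \<in> S1" for \<alpha>
  proof -
    have "(\<Sum>i<n. (lower \<alpha>) i) = (\<Sum>i<n. \<alpha> i) - 1"
      using that \<open>k < n\<close> by (simp add: S1_def lower_def sum.remove[of "{..<n}" k])
    then show ?thesis using that by (auto simp: S1_def mons_eq_def exps_def lower_def)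
  qed
  then have "is_form n (D - 1) g"
    unfolding g_def[abs_def] S1_def by (intro form_sum form_smult form_monom) (auto simp: finite_mons_eq S1_def)
  with f_eq show ?thesis using that by blast
qed

text \<open>Each square in a sum of squares that vanishes on \<open>x\<^sub>k = 0\<close> vanishes there too, so
  \<open>x\<^sub>k\<close> can be factored out of it; continuity removes the factor \<open>x\<^sub>k\<^sup>2\<close> also at \<open>x\<^sub>k = 0\<close>.\<close>

lemma sos_of_forms_cancel_var_square:
  assumes f: "is_poly n f" and "k < n" and sos: "sos_of_forms n D (\<lambda>x. (x k)\<^sup>2 * f x)"
  shows "sos_of_forms n (D - 1) f"
proof -
  obtain gs where gs: "\<forall>g\<in>set gs. is_form n D g" "\<And>x. (x k)\<^sup>2 * f x = (\<Sum>g\<leftarrow>gs. (g x)\<^sup>2)"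
    using sos unfolding sos_of_forms_def by blast
  have "\<forall>g\<in>set gs. \<exists>g'. is_form n (D - 1) g' \<and> (\<forall>x. g x = x k * g' x)"
  proof
    fix g assume "g \<in> set gs"
    have "g x = 0" if "x k = 0" for x
    proof -
      have "(g x)\<^sup>2 \<le> (\<Sum>g\<leftarrow>gs. (g x)\<^sup>2)"
        using \<open>g \<in> set gs\<close> by (intro member_le_sum_list) auto
      then show ?thesis using gs(2)[of x] that by simp
    qed
    then obtain g' where "is_form n (D - 1) g'" "\<And>x. g x = x k * g' x"
      using form_factor_var_if_vanishing gs(1) \<open>g \<in> set gs\<close> \<open>k < n\<close> by blast
    then show "\<exists>g'. is_form n (D - 1) g' \<and> (\<forall>x. g x = x k * g' x)" by blast
  qed
  from bchoice[OF this] obtain lower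
    where "\<forall>g\<in>set gs. is_form n (D - 1) (lower g) \<and> (\<forall>x. g x = x k * lower g x)" ..
  then have lower: "\<And>g. g \<in> set gs \<Longrightarrow> is_form n (D - 1) (lower g)"
    "\<And>g x. g \<in> set gs \<Longrightarrow> g x = x k * lower g x"
    by blast+
  have off_hyperplane: "f x = (\<Sum>g\<leftarrow>gs. (lower g x)\<^sup>2)" if "x k \<noteq> 0" for x
  proof -
    have "(x k)\<^sup>2 * f x = (\<Sum>g\<leftarrow>gs. (x k)\<^sup>2 * (lower g x)\<^sup>2)"
      unfolding gs(2)
    proof (intro arg_cong[where f=sum_list] map_cong refl)
      fix g assume "g \<in> set gs"
      then show "(g x)\<^sup>2 = (x k)\<^sup>2 * (lower g x)\<^sup>2" using lower(2)[of g x] by (simp add: power_mult_distrib)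
    qed
    also have "\<dots> = (x k)\<^sup>2 * (\<Sum>g\<leftarrow>gs. (lower g x)\<^sup>2)"
      by (simp add: sum_list_const_mult)
    finally show ?thesis using that by simp
  qed
  have "is_form n ((D - 1) * 2) (\<lambda>x. \<Sum>g\<leftarrow>gs. (lower g x)\<^sup>2)"
    using lower(1) by (intro form_sum_list form_power)
  from poly_eq_if_eq_off_hyperplane[OF f form_imp_poly[OF this] off_hyperplane]
  have "f x = (\<Sum>g\<leftarrow>map lower gs. (g x)\<^sup>2)" for x by (simp add: o_def)
  moreover have "\<forall>g\<in>set (map lower gs). is_form n (D - 1) g"
    using lower(1) by simp
  ultimately show ?thesis unfolding sos_of_forms_def by blast
qed

lemma sos_of_forms_cancel_var_power:
  assumes q: "is_form n m q" and "k < n"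
  shows "sos_of_forms n D (\<lambda>x. x k ^ (2 * e) * q x) \<Longrightarrow> sos_of_forms n (D - e) q"
proof (induction e arbitrary: D)
  case 0
  then show ?case by simp
next
  case (Suc e)
  have "(\<lambda>x. x k ^ (2 * Suc e) * q x) = (\<lambda>x. (x k)\<^sup>2 * (x k ^ (2 * e) * q x))"
    by (simp add: fun_eq_iff power_add power2_eq_square mult_ac)
  with Suc.prems have "sos_of_forms n D (\<lambda>x. (x k)\<^sup>2 * (x k ^ (2 * e) * q x))" by simp
  moreover have "is_form n (1 * (2 * e) + m) (\<lambda>x. x k ^ (2 * e) * q x)"
    using \<open>k < n\<close> q by (intro form_mult form_power form_var)
  ultimately have "sos_of_forms n (D - 1) (\<lambda>x. x k ^ (2 * e) * q x)"
    using sos_of_forms_cancel_var_square form_imp_poly \<open>k < n\<close> by blast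
  from Suc.IH[OF this] show ?case by simp
qed

section \<open>Uniform sum-of-squares multipliers\<close>

definition sos_multiplier :: "nat \<Rightarrow> nat \<Rightarrow> ((nat \<Rightarrow> real) \<Rightarrow> real) \<Rightarrow> bool" where
  "sos_multiplier n m h \<longleftrightarrow> (\<forall>p\<in>P_set n m. is_sos n (\<lambda>x. h x * p x))"

lemma sos_nonneg: "is_sos n f \<Longrightarrow> 0 \<le> f x"
  unfolding is_sos_def by (auto intro!: sum_list_nonneg)

lemma sos_multiplier_nonneg:
  assumes h: "sos_multiplier n m h" and q: "q \<in> P_set n m" "0 < q y" and "k < n" "x k \<noteq> 0"
  shows "0 \<le> h x"
proof -
  define p where "p z = q (\<lambda>i. (y i / x k) * z k)" for z
  have "is_form n m q" using q(1) by (simp add: P_set_def)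
  have "is_form n m p"
    unfolding p_def by (rule form_compose_linear[OF \<open>is_form n m q\<close>]) (use \<open>k < n\<close> in \<open>intro form_smult form_var\<close>)
  then have "p \<in> P_set n m" using q(1) by (auto simp: P_set_def psd_def p_def)
  then have "is_sos n (\<lambda>x. h x * p x)" using h by (simp add: sos_multiplier_def)
  from sos_nonneg[OF this, of x] have "0 \<le> h x * p x" by simp
  moreover have "p x = q y" using \<open>x k \<noteq> 0\<close> by (simp add: p_def)
  ultimately show ?thesis using q(2) by (simp add: zero_le_mult_iff)
qed

text \<open>A nonzero multiplier is nonnegative wherever \<open>x\<^sub>0 \<noteq> 0\<close>, and \<open>x\<^sub>0 \<noteq> 0\<close> holds at some point where
  it does not vanish; comparing \<open>a\<close> with \<open>-a\<close> then shows that its degree is even.\<close>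

lemma sos_multiplier_positive_point:
  assumes "0 < n" "is_form n d h" "h \<noteq> (\<lambda>x. 0)" "sos_multiplier n m h" "q \<in> P_set n m" "0 < q y"
  obtains a where "even d" "0 < h a" "0 < a 0"
proof -
  have nonneg: "0 \<le> h x" if "x 0 \<noteq> 0" for x
    using sos_multiplier_nonneg[OF assms(4-6), of 0] assms(1) that by blast
  obtain a where a: "h a \<noteq> 0" "a 0 \<noteq> 0"
    using poly_eq_if_eq_off_hyperplane[OF form_imp_poly[OF assms(2)] form_imp_poly[OF form_zero], of 0]
      assms(3) by (metis ext)
  have "0 < h a" using a nonneg[of a] by simp
  have "0 \<le> (-1) ^ d * h a"
    using nonneg[of "\<lambda>i. (-1) * a i"] a(2) form_homogeneous[OF assms(2), of "-1" a] by simp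
  with \<open>0 < h a\<close> have "even d"
    by (cases "even d") (simp_all add: mult_le_0_iff)
  moreover have "0 < h (\<lambda>i. a 0 * a i)"
    using \<open>0 < h a\<close> \<open>even d\<close> a(2) form_homogeneous[OF assms(2)] by (simp add: zero_less_power_eq)
  moreover have "0 < a 0 * a 0" using a(2) not_real_square_gt_zero by blast
  ultimately show ?thesis using that by blast
qed

lemma sos_multiplier_change_coordinates:
  assumes h: "sos_multiplier n m h" "is_form n d h" and q: "is_form n m q" "psd q"
    and deg: "d + m = 2 * D"
    and L: "\<And>i. i < n \<Longrightarrow> is_form n 1 (\<lambda>y. L y i)"
    and L': "\<And>i. i < n \<Longrightarrow> is_form n 1 (\<lambda>x. L' x i)"
    and inverse: "\<And>y. L' (L y) = y"
  shows "sos_of_forms n D (\<lambda>y. h (L y) * q y)"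
proof -
  define p where "p x = q (L' x)" for x
  have "is_form n m p" unfolding p_def by (rule form_compose_linear[OF q(1) L'])
  then have "p \<in> P_set n m" using q(2) by (auto simp: P_set_def psd_def p_def)
  then have "is_sos n (\<lambda>x. h x * p x)" using h(1) by (simp add: sos_multiplier_def)
  moreover have "is_form n (2 * D) (\<lambda>x. h x * p x)"
    using form_mult[OF h(2) \<open>is_form n m p\<close>] deg by simp
  ultimately have "sos_of_forms n D (\<lambda>x. h x * p x)"
    by (rule sos_of_forms_if_sos[rotated])
  from sos_of_forms_compose_linear[where L=L, OF this L] show ?thesis
    by (simp add: p_def inverse)
qed

text \<open>The substitution \<open>y \<mapsto> t y + y\<^sub>0 a\<close> is invertible for \<open>t > 0\<close>, and as \<open>t \<rightarrow> 0\<close> it turns the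
  multiplier \<open>h\<close> into \<open>h a * y\<^sub>0\<^sup>d\<close>; the bound on the number of squares lets the limit be taken.\<close>

lemma sos_multiplier_limit:
  assumes "0 < n" and h: "sos_multiplier n m h" "is_form n d h" and q: "is_form n m q" "psd q"
    and deg: "d + m = 2 * D" and a: "0 < a 0"
  shows "sos_of_span (card (mons_eq n D)) (mons_eq n D) (monom_eval n) (\<lambda>y. h a * y 0 ^ d * q y)"
proof (rule sos_of_span_limit)
  define M where "M s y = (\<lambda>i. s * y i + a i * y 0)" for s :: real and y :: "nat \<Rightarrow> real"
  define M' where "M' s x = (\<lambda>i. (1 / s) * x i + (- a i / ((s + a 0) * s)) * x 0)" for s :: real and x :: "nat \<Rightarrow> real"
  define t where "t j = inverse (real (Suc j))" for j
  have inverse: "M' s (M s y) = y" if "0 < s" for s y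
  proof
    fix i
    have "M' s (M s y) i = (1 / s) * (s * y i + a i * y 0) + (- a i / ((s + a 0) * s)) * (s * y 0 + a 0 * y 0)"
      by (simp add: M_def M'_def)
    also have "\<dots> = y i + a i * y 0 / s - a i * y 0 * (s + a 0) / ((s + a 0) * s)"
      using that by (simp add: field_simps)
    also have "\<dots> = y i" using that a by simp
    finally show "M' s (M s y) i = y i" .
  qed
  have linear: "is_form n 1 (\<lambda>y. M s y i)" "is_form n 1 (\<lambda>y. M' s y i)" if "i < n" for s i
    unfolding M_def M'_def by (rule form_linear_combination_of_two_vars[OF that \<open>0 < n\<close>])+
  show "sos_of_span (card (mons_eq n D)) (mons_eq n D) (monom_eval n) (\<lambda>y. h (M (t j) y) * q y)" for j
  proof (rule sos_of_span_mons_if_sos_of_forms)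
    show "sos_of_forms n D (\<lambda>y. h (M (t j) y) * q y)"
      by (rule sos_multiplier_change_coordinates[OF h q deg, where L="M (t j)" and L'="M' (t j)"])
        (use linear inverse in \<open>auto simp: t_def\<close>)
  qed
  show "(\<lambda>j. h (M (t j) y) * q y) \<longlonglongrightarrow> h a * y 0 ^ d * q y" for y
  proof -
    have "isCont (\<lambda>s. h (\<lambda>i. y 0 * a i + s * y i)) 0"
      by (rule poly_isCont_line[OF form_imp_poly[OF h(2)]])
    then have "(\<lambda>j. h (\<lambda>i. y 0 * a i + t j * y i)) \<longlonglongrightarrow> h (\<lambda>i. y 0 * a i + 0 * y i)"
      unfolding t_def by (rule isCont_tendsto_compose[OF _ LIMSEQ_inverse_real_of_nat])
    moreover have "(\<lambda>i. y 0 * a i + t j * y i) = M (t j) y" for j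
      by (auto simp: M_def fun_eq_iff)
    moreover have "h (\<lambda>i. y 0 * a i + 0 * y i) = y 0 ^ d * h a"
      using form_homogeneous[OF h(2), of "y 0" a] by simp
    ultimately have "(\<lambda>j. h (M (t j) y)) \<longlonglongrightarrow> y 0 ^ d * h a" by simp
    from tendsto_mult_left[OF this, of "q y"] show ?thesis by (simp add: mult_ac)
  qed
  show "\<forall>\<alpha>\<in>mons_eq n D. c \<alpha> = 0" if "\<And>x. lincomb (mons_eq n D) (monom_eval n) c x = 0" for c
    using lincomb_monoms_eq_0_imp_coeff_eq_0[OF finite_mons_eq _ that] by (auto simp: mons_eq_def)
qed (rule finite_mons_eq)

lemma exists_pos_if_psd_not_sos:
  assumes "psd q" "\<not> is_sos n q"
  shows "\<exists>y. 0 < q y"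
proof (rule ccontr)
  assume "\<nexists>y. 0 < q y"
  with assms(1) have "q = (\<lambda>x. 0)"
    unfolding psd_def by (metis antisym not_less ext)
  then have "is_sos n q" unfolding is_sos_def by (intro exI[of _ "[]"]) simp
  with assms(2) show False ..
qed

theorem theorem1:
  fixes n m :: nat
  assumes "n \<ge> 1" and "even m" and "m > 0"
    and "Delta_set n m \<noteq> {}"
  shows "\<not> (\<exists>d h. is_form n d h \<and> h \<noteq> (\<lambda>x. 0) \<and>
              (\<forall>p\<in>P_set n m. is_sos n (\<lambda>x. h x * p x)))"
proof
  assume "\<exists>d h. is_form n d h \<and> h \<noteq> (\<lambda>x. 0) \<and> (\<forall>p\<in>P_set n m. is_sos n (\<lambda>x. h x * p x))"
  then obtain d h where h: "is_form n d h" "h \<noteq> (\<lambda>x. 0)" "sos_multiplier n m h"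
    unfolding sos_multiplier_def by blast
  have "0 < n" using assms(1) by simp
  obtain q where q: "q \<in> P_set n m" "\<not> is_sos n q"
    using assms(4) by (auto simp: Delta_set_def Sigma_set_def P_set_def)
  then have q_form: "is_form n m q" and q_psd: "psd q" by (simp_all add: P_set_def)
  obtain y where "0 < q y"
    using exists_pos_if_psd_not_sos[OF q_psd q(2)] ..
  obtain a where "even d" "0 < h a" "0 < a 0"
    by (rule sos_multiplier_positive_point[OF \<open>0 < n\<close> h q(1) \<open>0 < q y\<close>])
  then obtain e where "d = 2 * e" by blast
  define D where "D = e + m div 2"
  have "d + m = 2 * D" using \<open>d = 2 * e\<close> assms(2) by (simp add: D_def)
  from sos_multiplier_limit[where a=a, OF \<open>0 < n\<close> h(3,1) q_form q_psd this \<open>0 < a 0\<close>]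
  have "sos_of_span (card (mons_eq n D)) (mons_eq n D) (monom_eval n) (\<lambda>y. 1 / h a * (h a * y 0 ^ d * q y))"
    by (rule sos_of_span_scale) (use \<open>0 < h a\<close> in simp)
  then have "sos_of_forms n D (\<lambda>y. y 0 ^ (2 * e) * q y)"
    using \<open>0 < h a\<close> \<open>d = 2 * e\<close> by (intro sos_of_forms_if_sos_of_span_mons) simp
  then have "is_sos n q"
    by (rule sos_if_sos_of_forms[OF sos_of_forms_cancel_var_power[OF q_form \<open>0 < n\<close>]])
  with q(2) show False ..
qed

end
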